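(* Fix a class index $k$, an iteration $t$, data $S_1,\dots,S_N$, weights $r^{(t)}_{nk}\ge 0$, and a tuning parameter $\rho>0$. For a coefficient vector $\boldsymbol B_k\in\mathbb R^H$ let $\hat\mu^{(t)}_\phi(\boldsymbol B_k)$ be the solution $\mu$ of $$\sum_{n=1}^N r^{(t)}_{nk}\,L(S_n)\,\phi_\rho\Big(\log\mathrm{NHP}(S_n\mid\boldsymbol B_k)/L(S_n)-\mu\Big)=0.$$ Then the gradient $\varrho^{(t)}_k:=\frac{\partial\hat\mu^{(t)}_\phi(\boldsymbol B_k)}{\partial\boldsymbol B_k}\Big|_{\boldsymbol B_k^{(t-1)}}$ equals $$\sum_{n=1}^N\frac{r^{(t)}_{nk}w^{(t)}_{nk}}{\sum_{n'=1}^N r^{(t)}_{n'k}w^{(t)}_{n'k}L(S_{n'})}\cdot\frac{\partial\log\mathrm{NHP}(S_n\mid\boldsymbol B_k)}{\partial\boldsymbol B_k}\Big|_{\boldsymbol B_k^{(t-1)}},$$ where $w^{(t)}_{nk}=\phi_\rho'\Big(\log\mathrm{NHP}(S_n\mid\boldsymbol B^{(t-1)}_k)/L(S_n)-\hat\mu^{(t)}_\phi(\boldsymbol B^{(t-1)}_k)\Big)$.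
   Context: Event streams are observed over $L(S)$ periods of length $T$. Given periodic basis functions $\kappa_1,\dots,\kappa_H$ on $[0,T]$ (extended $T$-periodically) and $\boldsymbol B_k=(b_{k,1},\dots,b_{k,H})$, set $\lambda_k(t)=\sum_h b_{k,h}\kappa_h(t)$ and, for $S=(t_1,\dots,t_M)$, $\mathrm{NHP}(S\mid\boldsymbol B_k)=\prod_i\lambda_k(t_i)\exp\big(-\int_0^{L(S)T}\lambda_k(t)dt\big)$. The Catoni-type influence function is $\phi(x)=\log(1+x+x^2/2)$ for $0\le x\le 2$, $\phi(x)=\frac{0.032}{9}(x-9.5)^3+1.5+\log 5$ for $2<x\le 9.5$, $\phi(x)=1.5+\log 5$ for $x>9.5$, and $\phi(x)=-\phi(-x)$ for $x<0$; $\phi_\rho(x):=\rho^{-1}\phi(\rho x)$. *)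

theory Defs
  imports "HOL-Analysis.Analysis"
begin

definition per_ext :: "real \<Rightarrow> (real \<Rightarrow> real) \<Rightarrow> real \<Rightarrow> real" where
  "per_ext T f t = f (T * frac (t / T))"

definition lam :: "('h::finite \<Rightarrow> real \<Rightarrow> real) \<Rightarrow> real \<Rightarrow> real^'h \<Rightarrow> real \<Rightarrow> real" where
  "lam \<kappa> T B t = (\<Sum>h\<in>UNIV. B $ h * per_ext T (\<kappa> h) t)"

text \<open>NHP likelihood of an event sequence S (list of event times) observed over L(S) periods.\<close>
definition NHP :: "('h::finite \<Rightarrow> real \<Rightarrow> real) \<Rightarrow> real \<Rightarrow> (real list \<Rightarrow> nat)
    \<Rightarrow> real list \<Rightarrow> real^'h \<Rightarrow> real" where
  "NHP \<kappa> T L S B =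
     (\<Prod>t\<leftarrow>S. lam \<kappa> T B t) * exp (- integral {0 .. real (L S) * T} (lam \<kappa> T B))"

text \<open>Catoni-type influence function.\<close>
definition phi :: "real \<Rightarrow> real" where
  "phi x = (if 0 \<le> x then
              (if x \<le> 2 then ln (1 + x + x\<^sup>2 / 2)
               else if x \<le> 9.5 then 0.032 / 9 * (x - 9.5) ^ 3 + 1.5 + ln 5
               else 1.5 + ln 5)
            else
              - (if - x \<le> 2 then ln (1 + (- x) + (- x)\<^sup>2 / 2)
                 else if - x \<le> 9.5 then 0.032 / 9 * ((- x) - 9.5) ^ 3 + 1.5 + ln 5
                 else 1.5 + ln 5))"

definition phi_rho :: "real \<Rightarrow> real \<Rightarrow> real" where
  "phi_rho \<rho> x = phi (\<rho> * x) / \<rho>"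

definition est_eq :: "('h::finite \<Rightarrow> real \<Rightarrow> real) \<Rightarrow> real \<Rightarrow> (real list \<Rightarrow> nat)
    \<Rightarrow> nat \<Rightarrow> (nat \<Rightarrow> real list) \<Rightarrow> (nat \<Rightarrow> real) \<Rightarrow> real \<Rightarrow> real^'h \<Rightarrow> real \<Rightarrow> real" where
  "est_eq \<kappa> T L N S r \<rho> B \<mu> =
     (\<Sum>n = 1..N. r n * real (L (S n)) *
        phi_rho \<rho> (ln (NHP \<kappa> T L (S n) B) / real (L (S n)) - \<mu>))"

definition mu_hat :: "('h::finite \<Rightarrow> real \<Rightarrow> real) \<Rightarrow> real \<Rightarrow> (real list \<Rightarrow> nat)
    \<Rightarrow> nat \<Rightarrow> (nat \<Rightarrow> real list) \<Rightarrow> (nat \<Rightarrow> real) \<Rightarrow> real \<Rightarrow> real^'h \<Rightarrow> real" where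
  "mu_hat \<kappa> T L N S r \<rho> B = (THE \<mu>. est_eq \<kappa> T L N S r \<rho> B \<mu> = 0)"

end

(* Only differentiability of phi is available (its pieces glue with matching derivatives at
   0, 2 and 9.5), not continuity of its derivative, so the C^1 implicit function theorem does
   not apply directly. Instead: the mu-derivative -D of the estimating equation at B0 is
   nonzero, so the equation changes sign around mu(B0), and by the intermediate value theorem
   and local uniqueness the root mu(B) is continuous at B0. Writing
   phi_rho z - phi_rho z_n = Q_n(z) (z - z_n) with Caratheodory slopes Q_n continuous at z_n,
   the difference of the equations at B and at B0 gives the exact identity
     mu(B) - mu(B0) = sum_n K_n(B) (g_n(B) - g_n(B0)),   K_n(B) --> r_n w_n / D,
   with g_n = log NHP(S_n | .); a factor tending to a limit times a differentiable function
   vanishing at B0 is differentiable, with the limit as coefficient. *)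

theory Submission
  imports Defs
begin

lemma has_real_derivative_glue:
  fixes f g h :: "real \<Rightarrow> real"
  assumes g: "(g has_real_derivative d) (at x)" and h: "(h has_real_derivative d) (at x)"
    and "\<delta> > 0"
    and left: "\<And>y. x - \<delta> < y \<Longrightarrow> y \<le> x \<Longrightarrow> f y = g y"
    and right: "\<And>y. x \<le> y \<Longrightarrow> y < x + \<delta> \<Longrightarrow> f y = h y"
  shows "(f has_real_derivative d) (at x)"
proof -
  have "(f has_real_derivative d) (at x within {..x})"
    by (rule has_field_derivative_transform_within[OF has_field_derivative_at_within[OF g]
          \<open>\<delta> > 0\<close>])
       (auto simp: left dist_real_def)
  moreover have "(f has_real_derivative d) (at x within {x..})"
    by (rule has_field_derivative_transform_within[OF has_field_derivative_at_within[OF h]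
          \<open>\<delta> > 0\<close>])
       (auto simp: right dist_real_def)
  ultimately have "((\<lambda>y. (f y - f x) / (y - x)) \<longlongrightarrow> d) (at x within {..x} \<union> {x..})"
    unfolding has_field_derivative_iff at_within_union by (rule filterlim_sup)
  moreover have "{..x} \<union> {x..} = UNIV" by auto
  ultimately show ?thesis by (simp add: has_field_derivative_iff)
qed

definition phi_log :: "real \<Rightarrow> real" where
  "phi_log y = ln (1 + y + y\<^sup>2 / 2)"

definition phi_cubic :: "real \<Rightarrow> real" where
  "phi_cubic y = 0.032 / 9 * (y - 9.5) ^ 3 + 1.5 + ln 5"

lemma phi_odd: "phi (- x) = - phi x"
  unfolding phi_def by (cases "x < 0") (simp_all add: not_less)

lemma phi_nonneg_eq:
  "0 \<le> x \<Longrightarrow>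
    phi x = (if x \<le> 2 then phi_log x else if x \<le> 9.5 then phi_cubic x else 1.5 + ln 5)"
  unfolding phi_def phi_log_def phi_cubic_def by simp

lemma phi_log_has_real_derivative:
  "(phi_log has_real_derivative (1 + y) / (1 + y + y\<^sup>2 / 2)) (at y)"
proof -
  have "1 + y + y\<^sup>2 / 2 = ((y + 1)\<^sup>2 + 1) / 2"
    by (simp add: power2_eq_square field_simps)
  also have "\<dots> > 0"
    by (simp add: add_nonneg_pos)
  finally show ?thesis
    unfolding phi_log_def by (auto intro!: derivative_eq_intros simp: power2_eq_square field_simps)
qed

lemma phi_cubic_has_real_derivative:
  "(phi_cubic has_real_derivative 0.032 / 9 * (3 * (y - 9.5)\<^sup>2)) (at y)"
  unfolding phi_cubic_def by (auto intro!: derivative_eq_intros simp: power2_eq_square)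

lemma phi_differentiable_pos:
  assumes "x > 0"
  shows "phi differentiable (at x)"
proof -
  consider "x < 2" | "x = 2" | "2 < x" "x < 9.5" | "x = 9.5" | "x > 9.5" by linarith
  then have "\<exists>d. (phi has_real_derivative d) (at x)"
  proof cases
    case 1
    show ?thesis
      by (rule exI, rule has_field_derivative_transform_within_open[OF phi_log_has_real_derivative,
            of "{0<..<2}"]) (use 1 assms in \<open>auto simp: phi_nonneg_eq\<close>)
  next
    case 2
    have "(phi_log has_real_derivative 3/5) (at 2)" "(phi_cubic has_real_derivative 3/5) (at 2)"
      using phi_log_has_real_derivative[of 2] phi_cubic_has_real_derivative[of 2]
      by (simp_all add: power2_eq_square)
    then have "(phi has_real_derivative 3/5) (at 2)"
      by (rule has_real_derivative_glue[where \<delta>=1])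
         (simp_all add: phi_nonneg_eq phi_log_def phi_cubic_def power2_eq_square power3_eq_cube)
    then show ?thesis using 2 by auto
  next
    case 3
    show ?thesis
      by (rule exI, rule has_field_derivative_transform_within_open[OF phi_cubic_has_real_derivative,
            of "{2<..<9.5}"]) (use 3 in \<open>auto simp: phi_nonneg_eq\<close>)
  next
    case 4
    have "(phi_cubic has_real_derivative 0) (at 9.5)"
      using phi_cubic_has_real_derivative[of "9.5"] by simp
    then have "(phi has_real_derivative 0) (at 9.5)"
      by (rule has_real_derivative_glue[OF _ DERIV_const[of "1.5 + ln 5"], where \<delta>=1])
         (simp_all add: phi_nonneg_eq phi_cubic_def)
    then show ?thesis using 4 by blast
  next
    case 5
    show ?thesis
      by (rule exI, rule has_field_derivative_transform_within_open[OF DERIV_const, of "{9.5<..}"])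
         (use 5 in \<open>auto simp: phi_nonneg_eq\<close>)
  qed
  then show ?thesis by (simp add: real_differentiable_def)
qed

lemma has_real_derivative_odd_reflection:
  assumes "(f has_real_derivative d) (at (- y))"
  shows "((\<lambda>y. - f (- y)) has_real_derivative d) (at y)"
  using DERIV_minus[OF DERIV_chain2[OF assms DERIV_minus[OF DERIV_ident]]] by simp

lemma phi_differentiable: "phi differentiable (at x)"
proof -
  consider "x > 0" | "x = 0" | "x < 0" by linarith
  then show ?thesis
  proof cases
    case 1
    then show ?thesis by (rule phi_differentiable_pos)
  next
    case 2
    have right: "(phi_log has_real_derivative 1) (at 0)"
      using phi_log_has_real_derivative[of 0] by simp
    have left: "((\<lambda>y. - phi_log (- y)) has_real_derivative 1) (at 0)"
      using has_real_derivative_odd_reflection[OF phi_log_has_real_derivative[of "- 0"]] by simp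
    have "phi y = - phi_log (- y)" if "- 1 < y" "y \<le> 0" for y
      using phi_odd[of y] phi_nonneg_eq[of "- y"] that by simp
    then have "(phi has_real_derivative 1) (at 0)"
      by (intro has_real_derivative_glue[OF left right, where \<delta>=1]) (auto simp: phi_nonneg_eq)
    then show ?thesis
      using 2 real_differentiable_def by blast
  next
    case 3
    then obtain d where "(phi has_real_derivative d) (at (- x))"
      using phi_differentiable_pos[of "- x"] by (auto simp: real_differentiable_def)
    then have "(phi has_real_derivative d) (at x)"
      using has_real_derivative_odd_reflection[of phi] by (simp add: phi_odd)
    then show ?thesis
      using real_differentiable_def by blast
  qed
qed

lemma phi_rho_differentiable:
  assumes "\<rho> \<noteq> 0"
  shows "phi_rho \<rho> differentiable (at x)"
proof -
  obtain d where "(phi has_real_derivative d) (at (\<rho> * x))"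
    using phi_differentiable by (auto simp: real_differentiable_def)
  then have "((\<lambda>x. phi (\<rho> * x) / \<rho>) has_real_derivative d * \<rho> / \<rho>) (at x)"
    by (auto intro!: derivative_eq_intros DERIV_chain2[where f=phi])
  then show ?thesis
    unfolding phi_rho_def[abs_def] real_differentiable_def by blast
qed

lemma DERIV_nonzero_sign_change:
  fixes h :: "real \<Rightarrow> real"
  assumes "(h has_real_derivative D) (at x)" and "D \<noteq> 0" and "h x = 0"
  obtains d where "d > 0" and "\<And>t. 0 < t \<Longrightarrow> t < d \<Longrightarrow> h (x - t) * h (x + t) < 0"
proof -
  have "((\<lambda>y. D * h y) has_real_derivative D * D) (at x)"
    using assms(1) by (rule DERIV_cmult)
  moreover have "D * D > 0"
    using assms(2) by (metis not_real_square_gt_zero)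
  ultimately obtain d1 d2 where d: "d1 > 0" "d2 > 0"
    and inc_right: "\<And>t. 0 < t \<Longrightarrow> t < d1 \<Longrightarrow> D * h (x + t) > 0"
    and inc_left: "\<And>t. 0 < t \<Longrightarrow> t < d2 \<Longrightarrow> D * h (x - t) < 0"
    using DERIV_pos_inc_right[of "\<lambda>y. D * h y"] DERIV_pos_inc_left[of "\<lambda>y. D * h y"]
      assms(3)
    by (metis mult_zero_right)
  have "h (x - t) * h (x + t) < 0" if "0 < t" "t < min d1 d2" for t
  proof -
    have "(D * D) * (h (x - t) * h (x + t)) = (D * h (x - t)) * (D * h (x + t))"
      by (simp add: algebra_simps)
    also have "\<dots> < 0"
      using inc_left[of t] inc_right[of t] that by (simp add: mult_neg_pos)
    finally show ?thesis
      using \<open>D * D > 0\<close> by (simp add: mult_less_0_iff)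
  qed
  then show ?thesis
    using that[of "min d1 d2"] d by simp
qed

lemma tendsto_implicit_root:
  fixes F :: "'a::topological_space \<Rightarrow> real \<Rightarrow> real"
  assumes cont: "\<And>B. continuous_on UNIV (F B)"
    and tend: "\<And>\<mu>. ((\<lambda>B. F B \<mu>) \<longlongrightarrow> F a \<mu>) (at a)"
    and deriv: "(F a has_real_derivative D) (at \<mu>0)" and "D \<noteq> 0" and "F a \<mu>0 = 0"
    and unique: "\<forall>\<^sub>F B in at a. \<forall>z. F B z = 0 \<longrightarrow> mu B = z"
  shows "(mu \<longlongrightarrow> \<mu>0) (at a)"
  unfolding tendsto_iff
proof (intro allI impI)
  fix e :: real
  assume "e > 0"
  obtain d where "d > 0"
    and sign_change: "\<And>t. 0 < t \<Longrightarrow> t < d \<Longrightarrow> F a (\<mu>0 - t) * F a (\<mu>0 + t) < 0"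
    using DERIV_nonzero_sign_change[OF deriv \<open>D \<noteq> 0\<close> \<open>F a \<mu>0 = 0\<close>] by blast
  define t where "t = min e d / 2"
  have t: "0 < t" "t < d" "t < e"
    using \<open>e > 0\<close> \<open>d > 0\<close> unfolding t_def by auto
  have "((\<lambda>B. F B (\<mu>0 - t) * F B (\<mu>0 + t)) \<longlongrightarrow> F a (\<mu>0 - t) * F a (\<mu>0 + t)) (at a)"
    by (intro tendsto_mult tend)
  then have "\<forall>\<^sub>F B in at a. F B (\<mu>0 - t) * F B (\<mu>0 + t) < 0"
    using sign_change[OF t(1,2)] order_tendstoD(2) by blast
  with unique show "\<forall>\<^sub>F B in at a. dist (mu B) \<mu>0 < e"
  proof eventually_elim
    case (elim B)
    then have "0 \<in> closed_segment (F B (\<mu>0 - t)) (F B (\<mu>0 + t))"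
      by (auto simp: closed_segment_eq_real_ivl mult_less_0_iff)
    then obtain z where "z \<in> closed_segment (\<mu>0 - t) (\<mu>0 + t)" "F B z = 0"
      using IVT'_closed_segment_real continuous_on_subset[OF cont] by blast
    moreover from this have "mu B = z"
      using elim(1) by blast
    ultimately show ?case
      using t by (auto simp: closed_segment_eq_real_ivl dist_real_def)
  qed
qed

lemma estimating_eq_increment:
  fixes r l q x y :: "'i \<Rightarrow> real" and f :: "real \<Rightarrow> real"
  assumes l: "\<And>n. n \<in> I \<Longrightarrow> l n \<noteq> 0"
    and slope: "\<And>n. n \<in> I \<Longrightarrow>
      f (x n / l n - m) - f (y n / l n - m0) = q n * ((x n / l n - m) - (y n / l n - m0))"
    and root: "(\<Sum>n\<in>I. r n * l n * f (x n / l n - m)) = 0"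
    and root0: "(\<Sum>n\<in>I. r n * l n * f (y n / l n - m0)) = 0"
    and P: "(\<Sum>n\<in>I. r n * l n * q n) \<noteq> 0"
  shows "m - m0 = (\<Sum>n\<in>I. r n * q n / (\<Sum>n\<in>I. r n * l n * q n) * (x n - y n))"
proof -
  have "0 = (\<Sum>n\<in>I. r n * l n * f (x n / l n - m)) - (\<Sum>n\<in>I. r n * l n * f (y n / l n - m0))"
    using root root0 by simp
  also have "\<dots> = (\<Sum>n\<in>I. r n * l n * (f (x n / l n - m) - f (y n / l n - m0)))"
    by (simp add: sum_subtractf right_diff_distrib)
  also have "\<dots> = (\<Sum>n\<in>I. r n * l n * q n * ((x n / l n - m) - (y n / l n - m0)))"
    by (intro sum.cong) (simp_all add: slope)
  also have "\<dots> = (\<Sum>n\<in>I. r n * q n * (x n - y n) - (m - m0) * (r n * l n * q n))"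
    by (intro sum.cong) (auto simp: l field_simps)
  also have "\<dots> = (\<Sum>n\<in>I. r n * q n * (x n - y n)) - (m - m0) * (\<Sum>n\<in>I. r n * l n * q n)"
    by (simp add: sum_subtractf sum_distrib_left)
  finally show ?thesis
    using P by (simp add: sum_divide_distrib[symmetric] field_simps)
qed

lemma has_derivative_mult_vanishing:
  fixes g :: "'a::real_normed_vector \<Rightarrow> real"
  assumes g: "(g has_derivative g') (at x)" and "g x = 0" and K: "(K \<longlongrightarrow> k) (at x)"
  shows "((\<lambda>y. K y * g y) has_derivative (\<lambda>v. k * g' v)) (at x)"
proof -
  obtain C where "C > 0" and C: "\<And>v. norm (g' v) \<le> norm v * C"
    using bounded_linear.pos_bounded[OF has_derivative_bounded_linear[OF g]] by blast
  have "((\<lambda>y. (K y - k) * g y) has_derivative (\<lambda>v. 0)) (at x)"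
    unfolding has_derivative_within_alt2
  proof (intro conjI allI impI)
    fix e :: real
    assume "e > 0"
    have "\<forall>\<^sub>F y in at x. norm (g y - g x - g' (y - x)) \<le> 1 * norm (y - x)"
      using g unfolding has_derivative_within_alt2 by (metis zero_less_one)
    moreover have "\<forall>\<^sub>F y in at x. dist (K y) k < e / (C + 1)"
      using K \<open>e > 0\<close> \<open>C > 0\<close> by (simp add: tendsto_iff)
    ultimately show "\<forall>\<^sub>F y in at x. norm ((K y - k) * g y - (K x - k) * g x - 0) \<le> e * norm (y - x)"
    proof eventually_elim
      case (elim y)
      have "\<bar>g y\<bar> \<le> \<bar>g y - g' (y - x)\<bar> + \<bar>g' (y - x)\<bar>"
        by linarith
      also have "\<dots> \<le> (C + 1) * norm (y - x)"
        using elim(1) C[of "y - x"] \<open>g x = 0\<close> by (simp add: algebra_simps)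
      finally have "\<bar>(K y - k) * g y\<bar> \<le> e / (C + 1) * ((C + 1) * norm (y - x))"
        unfolding abs_mult using elim(2) \<open>C > 0\<close>
        by (intro mult_mono) (auto simp: dist_real_def)
      then show ?case
        using \<open>C > 0\<close> \<open>g x = 0\<close> by simp
    qed
  qed simp
  from has_derivative_add[OF has_derivative_mult_right[OF g, of k] this]
  show ?thesis
    by (simp add: algebra_simps)
qed

lemma has_derivative_of_increment:
  fixes g g' :: "'i \<Rightarrow> 'a::real_normed_vector \<Rightarrow> real"
  assumes g: "\<And>n. n \<in> I \<Longrightarrow> (g n has_derivative g' n) (at a)"
    and K: "\<And>n. n \<in> I \<Longrightarrow> (K n \<longlongrightarrow> k n) (at a)"
    and increment: "\<forall>\<^sub>F B in at a. mu B - mu a = (\<Sum>n\<in>I. K n B * (g n B - g n a))"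
  shows "(mu has_derivative (\<lambda>v. \<Sum>n\<in>I. k n * g' n v)) (at a)"
proof -
  have "((\<lambda>B. K n B * (g n B - g n a)) has_derivative (\<lambda>v. k n * g' n v)) (at a)" if "n \<in> I" for n
    using has_derivative_mult_vanishing[OF has_derivative_diff[OF g[OF that] has_derivative_const]
        _ K[OF that]]
    by simp
  then have "((\<lambda>B. (\<Sum>n\<in>I. K n B * (g n B - g n a)) + mu a) has_derivative
      (\<lambda>v. \<Sum>n\<in>I. k n * g' n v)) (at a)"
    by (intro has_derivative_add_const has_derivative_sum)
  moreover have "\<forall>\<^sub>F B in at a. (\<Sum>n\<in>I. K n B * (g n B - g n a)) + mu a = mu B"
    using increment by eventually_elim simp
  ultimately show ?thesis
    by (rule has_derivative_transform_eventually) simp_all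
qed

lemma estimating_root_tendsto:
  fixes I :: "'i set" and r l :: "'i \<Rightarrow> real" and f f' :: "real \<Rightarrow> real"
    and g :: "'i \<Rightarrow> 'a::topological_space \<Rightarrow> real" and mu :: "'a \<Rightarrow> real" and a :: 'a
  defines "F \<equiv> \<lambda>B \<mu>. \<Sum>n\<in>I. r n * l n * f (g n B / l n - \<mu>)"
    and "D \<equiv> \<Sum>n\<in>I. r n * f' (g n a / l n - mu a) * l n"
  assumes f: "\<And>x. (f has_real_derivative f' x) (at x)"
    and l: "\<And>n. n \<in> I \<Longrightarrow> l n \<noteq> 0"
    and g: "\<And>n. n \<in> I \<Longrightarrow> (g n \<longlongrightarrow> g n a) (at a)"
    and root: "\<forall>\<^sub>F B in nhds a. F B (mu B) = 0 \<and> (\<forall>z. F B z = 0 \<longrightarrow> mu B = z)"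
    and "D \<noteq> 0"
  shows "(mu \<longlongrightarrow> mu a) (at a)"
proof (rule tendsto_implicit_root[where D = "- D"])
  have f_cont: "isCont f x" for x
    using f by (rule DERIV_isCont)
  show "continuous_on UNIV (F B)" for B
    unfolding F_def
    by (intro continuous_intros continuous_on_compose2[OF continuous_at_imp_continuous_on[of UNIV f]])
       (auto simp: f_cont)
  show "((\<lambda>B. F B \<mu>) \<longlongrightarrow> F a \<mu>) (at a)" for \<mu>
    unfolding F_def
    by (intro tendsto_sum tendsto_mult tendsto_const isCont_tendsto_compose[OF f_cont]
          tendsto_diff tendsto_divide g) (auto dest: l)
  have "(F a has_real_derivative
      (\<Sum>n\<in>I. r n * l n * (f' (g n a / l n - mu a) * (0 - 1)))) (at (mu a))"
    unfolding F_def by (intro DERIV_sum DERIV_cmult DERIV_chain2[OF f] derivative_eq_intros) auto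
  moreover have "(\<Sum>n\<in>I. r n * l n * (f' (g n a / l n - mu a) * (0 - 1))) = - D"
    unfolding D_def by (simp add: sum_negf[symmetric] algebra_simps)
  ultimately show "(F a has_real_derivative - D) (at (mu a))"
    by simp
  show "- D \<noteq> 0"
    using \<open>D \<noteq> 0\<close> by simp
  show "F a (mu a) = 0" "\<forall>\<^sub>F B in at a. \<forall>z. F B z = 0 \<longrightarrow> mu B = z"
    using root by (auto simp: eventually_nhds_conv_at elim: eventually_mono)
qed

lemma estimating_root_has_derivative:
  fixes I :: "'i set" and r l :: "'i \<Rightarrow> real" and f f' :: "real \<Rightarrow> real"
    and g g' :: "'i \<Rightarrow> 'a::real_normed_vector \<Rightarrow> real" and mu :: "'a \<Rightarrow> real" and a :: 'a
  defines "F \<equiv> \<lambda>B \<mu>. \<Sum>n\<in>I. r n * l n * f (g n B / l n - \<mu>)"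
    and "D \<equiv> \<Sum>n\<in>I. r n * f' (g n a / l n - mu a) * l n"
  assumes f: "\<And>x. (f has_real_derivative f' x) (at x)"
    and l: "\<And>n. n \<in> I \<Longrightarrow> l n \<noteq> 0"
    and g: "\<And>n. n \<in> I \<Longrightarrow> (g n has_derivative g' n) (at a)"
    and root: "\<forall>\<^sub>F B in nhds a. F B (mu B) = 0 \<and> (\<forall>z. F B z = 0 \<longrightarrow> mu B = z)"
    and "D \<noteq> 0"
  shows "(mu has_derivative (\<lambda>v. \<Sum>n\<in>I. (r n * f' (g n a / l n - mu a) / D) * g' n v)) (at a)"
proof -
  define x0 where "x0 n = g n a / l n - mu a" for n
  have root_a: "F a (mu a) = 0"
    using eventually_nhds_x_imp_x[OF root] by simp
  have g_tendsto: "(g n \<longlongrightarrow> g n a) (at a)" if "n \<in> I" for n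
    using has_derivative_continuous[OF g[OF that]] by (simp add: continuous_at)
  have mu_tendsto: "(mu \<longlongrightarrow> mu a) (at a)"
    by (rule estimating_root_tendsto[where I = I and r = r and l = l and f = f and f' = f' and g = g,
          OF f l g_tendsto])
       (use root \<open>D \<noteq> 0\<close> in \<open>simp_all add: F_def D_def\<close>)
  have "\<forall>n. \<exists>q. (\<forall>z. f z - f (x0 n) = q z * (z - x0 n)) \<and> isCont q (x0 n) \<and>
      q (x0 n) = f' (x0 n)"
    using f CARAT_DERIV by blast
  then obtain Q where slope: "\<And>n z. f z - f (x0 n) = Q n z * (z - x0 n)"
    and Q: "\<And>n. isCont (Q n) (x0 n)" "\<And>n. Q n (x0 n) = f' (x0 n)"
    by metis
  define P where "P B = (\<Sum>n\<in>I. r n * l n * Q n (g n B / l n - mu B))" for B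
  have Q_tendsto: "((\<lambda>B. Q n (g n B / l n - mu B)) \<longlongrightarrow> f' (x0 n)) (at a)" if "n \<in> I" for n
  proof -
    have "((\<lambda>B. g n B / l n - mu B) \<longlongrightarrow> x0 n) (at a)"
      unfolding x0_def using l[OF that] by (intro tendsto_intros g_tendsto[OF that] mu_tendsto)
    then show ?thesis
      using isCont_tendsto_compose[OF Q(1)] Q(2) by metis
  qed
  have "(P \<longlongrightarrow> (\<Sum>n\<in>I. r n * l n * f' (x0 n))) (at a)"
    unfolding P_def by (intro tendsto_intros Q_tendsto)
  moreover have "(\<Sum>n\<in>I. r n * l n * f' (x0 n)) = D"
    unfolding D_def x0_def by (simp add: algebra_simps)
  ultimately have P_tendsto: "(P \<longlongrightarrow> D) (at a)"
    by simp
  have "\<forall>\<^sub>F B in at a. P B \<noteq> 0"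
    using tendsto_imp_eventually_ne[OF P_tendsto \<open>D \<noteq> 0\<close>] .
  moreover have "\<forall>\<^sub>F B in at a. F B (mu B) = 0"
    using root by (auto simp: eventually_nhds_conv_at elim: eventually_mono)
  ultimately have increment: "\<forall>\<^sub>F B in at a.
      mu B - mu a = (\<Sum>n\<in>I. r n * Q n (g n B / l n - mu B) / P B * (g n B - g n a))"
  proof eventually_elim
    case (elim B)
    show ?case
      unfolding P_def
      by (rule estimating_eq_increment[where f = f])
         (use elim root_a l in \<open>auto simp: F_def slope[unfolded x0_def] P_def\<close>)
  qed
  have K_tendsto: "((\<lambda>B. r n * Q n (g n B / l n - mu B) / P B) \<longlongrightarrow> r n * f' (x0 n) / D) (at a)"
    if "n \<in> I" for n
    by (intro tendsto_intros Q_tendsto that P_tendsto \<open>D \<noteq> 0\<close>)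
  show ?thesis
    using has_derivative_of_increment[OF g K_tendsto increment] by (simp add: x0_def)
qed

theorem proposition2:
  fixes \<kappa> :: "'h::finite \<Rightarrow> real \<Rightarrow> real"
    and T \<rho> :: real and L :: "real list \<Rightarrow> nat" and N :: nat
    and S :: "nat \<Rightarrow> real list" and r :: "nat \<Rightarrow> real" and B0 :: "real^'h"
  defines "w \<equiv> (\<lambda>n. deriv (phi_rho \<rho>)
              (ln (NHP \<kappa> T L (S n) B0) / real (L (S n)) - mu_hat \<kappa> T L N S r \<rho> B0))"
  assumes T_pos: "T > 0"
    and rho_pos: "\<rho> > 0"
    and r_nonneg: "\<And>n. n \<in> {1..N} \<Longrightarrow> r n \<ge> 0"
    and L_pos: "\<And>n. n \<in> {1..N} \<Longrightarrow> L (S n) > 0"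
    and unique_sol: "\<exists>\<epsilon>>0. \<forall>B. dist B B0 < \<epsilon> \<longrightarrow> (\<exists>!\<mu>. est_eq \<kappa> T L N S r \<rho> B \<mu> = 0)"
    and logNHP_diff: "\<And>n. n \<in> {1..N} \<Longrightarrow> (\<lambda>B. ln (NHP \<kappa> T L (S n) B)) differentiable (at B0)"
    and denom_nz: "(\<Sum>n' = 1..N. r n' * w n' * real (L (S n'))) \<noteq> 0"
  shows "(mu_hat \<kappa> T L N S r \<rho> has_derivative
           (\<lambda>v. \<Sum>n = 1..N. (r n * w n / (\<Sum>n' = 1..N. r n' * w n' * real (L (S n'))))
                 * frechet_derivative (\<lambda>B. ln (NHP \<kappa> T L (S n) B)) (at B0) v)) (at B0)"
proof -
  let ?g = "\<lambda>n B. ln (NHP \<kappa> T L (S n) B)"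
  let ?mu = "mu_hat \<kappa> T L N S r \<rho>"
  let ?F = "est_eq \<kappa> T L N S r \<rho>"
  have phi_rho_deriv: "(phi_rho \<rho> has_real_derivative deriv (phi_rho \<rho>) x) (at x)" for x
    using phi_rho_differentiable[of \<rho> x] rho_pos by (simp add: DERIV_deriv_iff_real_differentiable)
  have g_deriv: "(?g n has_derivative frechet_derivative (?g n) (at B0)) (at B0)" if "n \<in> {1..N}" for n
    using logNHP_diff[OF that] by (simp add: frechet_derivative_works)
  have "\<forall>\<^sub>F B in nhds B0. \<exists>!\<mu>. ?F B \<mu> = 0"
    using unique_sol by (simp add: eventually_nhds_metric)
  then have root: "\<forall>\<^sub>F B in nhds B0. ?F B (?mu B) = 0 \<and> (\<forall>z. ?F B z = 0 \<longrightarrow> ?mu B = z)"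
    unfolding mu_hat_def
  proof eventually_elim
    case (elim B)
    show ?case
      using theI'[OF elim] the1_equality[OF elim] by blast
  qed
  show ?thesis
    unfolding w_def
    by (rule estimating_root_has_derivative[where I = "{1..N}" and r = r and l = "\<lambda>n. real (L (S n))"
          and f = "phi_rho \<rho>" and f' = "deriv (phi_rho \<rho>)" and g = ?g
          and g' = "\<lambda>n. frechet_derivative (?g n) (at B0)" and mu = ?mu and a = B0])
       (use phi_rho_deriv g_deriv root[unfolded est_eq_def] denom_nz[unfolded w_def] in
         \<open>auto intro: L_pos\<close>)
qed

end
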